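(* Let $L$ be a Lévy process with triplet $(b,\sigma^2,\mu)$, $b=0$, and $X$ the solution of $dX_t=-aX_t\,dt+dL_t$, observed on the scheme described in the context. Write $L=\sigma W+J$ with $W$ a standard Brownian motion and $J$ an independent pure-jump Lévy process, and let $D_t=-a\int_0^tX_s\,ds$. Suppose $\sup_{s\ge0}E[|X_s|^l]<\infty$ for some $l\ge1$. Then for every $\delta\in(0,1/2)$ and $i\in\{1,\dots,n-1\}$, $$P\big(|\Delta_iW+\Delta_iD|>\Delta_n^{1/2-\delta}\big)=O\big(\Delta_n^{l(1/2+\delta)}\big)\quad\text{as }n\to\infty.$$
   Context: $X_0$ is independent of $L$. Observation scheme: for each $n$, times $0=t_0<t_1<\dots<t_n=T_n$ with $T_n\to\infty$, $\Delta_n=\max_i(t_{i+1}-t_i)\downarrow0$ and $n\Delta_nT_n^{-1}=O(1)$. For a process $Y$, $\Delta_iY=Y_{t_{i+1}}-Y_{t_i}$. *)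

theory Defs
  imports "HOL-Probability.Probability"
begin

definition mesh :: "(nat \<Rightarrow> nat \<Rightarrow> real) \<Rightarrow> nat \<Rightarrow> real" where
  "mesh tt n = Max {tt n (Suc i) - tt n i | i. i < n}"

definition obs_scheme :: "(nat \<Rightarrow> nat \<Rightarrow> real) \<Rightarrow> bool" where
  "obs_scheme tt \<longleftrightarrow>
     (\<forall>n. tt n 0 = 0) \<and>
     (\<forall>n. \<forall>i<n. tt n i < tt n (Suc i)) \<and>
     filterlim (\<lambda>n. tt n n) at_top sequentially \<and>
     (\<forall>n\<ge>1. mesh tt (Suc n) \<le> mesh tt n) \<and>
     (mesh tt \<longlonglongrightarrow> 0) \<and>
     (\<exists>C. \<forall>\<^sub>F n in sequentially. real n * mesh tt n / tt n n \<le> C)"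

definition cadlag :: "(real \<Rightarrow> real) \<Rightarrow> bool" where
  "cadlag f \<longleftrightarrow> (\<forall>t\<ge>0. continuous (at_right t) f \<and> (t > 0 \<longrightarrow> (\<exists>l. (f \<longlongrightarrow> l) (at_left t))))"

definition indep_increments :: "'w measure \<Rightarrow> (real \<Rightarrow> 'w \<Rightarrow> real) \<Rightarrow> bool" where
  "indep_increments M Z \<longleftrightarrow>
     (\<forall>(s::nat \<Rightarrow> real) k. 0 \<le> s 0 \<and> (\<forall>j<k. s j < s (Suc j)) \<longrightarrow>
        prob_space.indep_vars M (\<lambda>_. borel) (\<lambda>j \<omega>. Z (s (Suc j)) \<omega> - Z (s j) \<omega>) {..<k})"

definition brownian_motion :: "'w measure \<Rightarrow> (real \<Rightarrow> 'w \<Rightarrow> real) \<Rightarrow> bool" where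
  "brownian_motion M W \<longleftrightarrow>
     (\<forall>t. W t \<in> borel_measurable M) \<and>
     (AE \<omega> in M. W 0 \<omega> = 0) \<and>
     (AE \<omega> in M. continuous_on {0..} (\<lambda>t. W t \<omega>)) \<and>
     indep_increments M W \<and>
     (\<forall>s t. 0 \<le> s \<and> s < t \<longrightarrow>
        distributed M lborel (\<lambda>\<omega>. W t \<omega> - W s \<omega>) (normal_density 0 (sqrt (t - s))))"

definition levy_process :: "'w measure \<Rightarrow> (real \<Rightarrow> 'w \<Rightarrow> real) \<Rightarrow> bool" where
  "levy_process M Z \<longleftrightarrow>
     (\<forall>t. Z t \<in> borel_measurable M) \<and>
     (AE \<omega> in M. Z 0 \<omega> = 0) \<and>
     (AE \<omega> in M. cadlag (\<lambda>t. Z t \<omega>)) \<and>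
     indep_increments M Z \<and>
     (\<forall>s t. 0 \<le> s \<and> s \<le> t \<longrightarrow>
        distr M borel (\<lambda>\<omega>. Z t \<omega> - Z s \<omega>) = distr M borel (Z (t - s)))"

definition levy_measure :: "real measure \<Rightarrow> bool" where
  "levy_measure \<mu> \<longleftrightarrow> sets \<mu> = sets borel \<and> emeasure \<mu> {0} = 0 \<and>
     integrable \<mu> (\<lambda>x. min 1 (x\<^sup>2))"

definition levy_triplet :: "'w measure \<Rightarrow> (real \<Rightarrow> 'w \<Rightarrow> real) \<Rightarrow> real \<Rightarrow> real \<Rightarrow> real measure \<Rightarrow> bool" where
  "levy_triplet M Z b c \<mu> \<longleftrightarrow> levy_measure \<mu> \<and> c \<ge> 0 \<and>
     (\<forall>t\<ge>0. \<forall>u. char (distr M borel (Z t)) u =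
        exp (complex_of_real t *
          (\<i> * complex_of_real (b * u) - complex_of_real (c * u\<^sup>2 / 2)
           + (CLINT x|\<mu>. iexp (u * x) - 1 - \<i> * complex_of_real (u * x * indicator {-1..1} x)))))"

end

theory Submission
  imports Defs
begin

text \<open>The Brownian increment over a grid interval is centred Gaussian with variance at most
  the mesh \<Delta>, so Markov's inequality for a high even moment makes
  P(|\<Delta>W| > \<Delta>^(1/2-\<delta>)/2) smaller than any prescribed power of \<Delta>. The drift increment is
  -a times the integral of X over an interval of length at most \<Delta>; Jensen's inequality along
  each path and Tonelli bound its l-th moment by |a|^l K \<Delta>^l, where K bounds the l-th moments
  of X, and Markov's inequality turns this into the tail bound |a|^l K 2^l \<Delta>^(l(1/2+\<delta>)).
  Splitting the threshold between the two increments gives the claim. Only the Gaussian law of the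
  increments of W and the measurability, right-continuity and moment bound of X enter.\<close>

section \<open>Jensen's inequality along a path\<close>

lemma powr_ge_tangent_line:
  fixes m y l :: real
  assumes m: "0 < m" and y: "0 \<le> y" and l: "1 \<le> l"
  shows "m powr l + l * m powr (l - 1) * (y - m) \<le> y powr l"
proof (cases "y = 0")
  case True
  have "m powr (l - 1) * m = m powr l" using m by (simp add: powr_diff)
  then have "m powr l + l * m powr (l - 1) * (y - m) = (1 - l) * m powr l"
    using True by (simp add: algebra_simps)
  also have "\<dots> \<le> 0" using l by (simp add: mult_nonpos_nonneg)
  finally show ?thesis using True by simp
next
  case False
  with y have "0 < y" by simp
  have "(\<lambda>x. l * x powr (l - 1)) m * (y - m) \<le> y powr l - m powr l"
  proof (rule f''_imp_f'[where C="{0<..}" and f="\<lambda>x. x powr l"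
        and f''="\<lambda>x. l * (l - 1) * x powr (l - 2)"])
    show "\<And>x. x \<in> {0<..} \<Longrightarrow> ((\<lambda>x. x powr l) has_real_derivative l * x powr (l - 1)) (at x)"
      by (auto intro!: derivative_eq_intros)
    show "\<And>x. x \<in> {0<..} \<Longrightarrow>
        ((\<lambda>x. l * x powr (l - 1)) has_real_derivative l * (l - 1) * x powr (l - 2)) (at x)"
      by (auto intro!: derivative_eq_intros simp: algebra_simps)
    show "\<And>x. x \<in> {0<..} \<Longrightarrow> 0 \<le> l * (l - 1) * x powr (l - 2)" using l by simp
  qed (use m \<open>0 < y\<close> in auto)
  then show ?thesis by simp
qed

text \<open>Jensen's inequality, by integrating the tangent line of x \<mapsto> x^l at the mean of g.\<close>

lemma powr_integral_le:
  fixes g :: "real \<Rightarrow> real" and a b l :: real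
  assumes g: "g integrable_on {a..b}" and gl: "(\<lambda>s. g s powr l) integrable_on {a..b}"
    and g0: "\<And>s. s \<in> {a..b} \<Longrightarrow> 0 \<le> g s" and ab: "a < b" and l: "1 \<le> l"
  shows "(integral {a..b} g) powr l \<le> (b - a) powr (l - 1) * integral {a..b} (\<lambda>s. g s powr l)"
proof -
  define I where "I = integral {a..b} g"
  have "0 \<le> I" unfolding I_def using g g0 by (rule integral_nonneg)
  show ?thesis
  proof (cases "I = 0")
    case True
    have "0 \<le> integral {a..b} (\<lambda>s. g s powr l)" using gl by (rule integral_nonneg) simp
    with True l show ?thesis by (simp add: I_def)
  next
    case False
    define m where "m = I / (b - a)"
    have m: "0 < m" using False \<open>0 \<le> I\<close> ab by (simp add: m_def)
    define tangent where "tangent s = m powr l + l * m powr (l - 1) * (g s - m)" for s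
    have "((\<lambda>s. g s - m) has_integral I - (b - a) * m) {a..b}"
      using has_integral_diff[OF integrable_integral[OF g] has_integral_const_real[of m a b]] ab
      by (simp add: I_def mult.commute)
    then have tangent_int: "(tangent has_integral
        (b - a) * m powr l + l * m powr (l - 1) * (I - (b - a) * m)) {a..b}"
      unfolding tangent_def using has_integral_const_real[of "m powr l" a b] ab
      by (intro has_integral_add has_integral_mult_right) (simp_all add: mult.commute)
    have "(b - a) * m powr l \<le> integral {a..b} (\<lambda>s. g s powr l)"
    proof -
      have "(b - a) * m powr l = (b - a) * m powr l + l * m powr (l - 1) * (I - (b - a) * m)"
        using ab by (simp add: m_def)
      also have "\<dots> \<le> integral {a..b} (\<lambda>s. g s powr l)"
        using has_integral_le[OF tangent_int integrable_integral[OF gl]]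
          powr_ge_tangent_line[OF m g0 l] by (simp add: tangent_def)
      finally show ?thesis .
    qed
    moreover have "I powr l = (b - a) powr (l - 1) * ((b - a) * m powr l)"
    proof -
      have "I powr l = (b - a) powr l * m powr l"
        using ab m by (simp add: m_def powr_mult[symmetric])
      also have "(b - a) powr l = (b - a) powr (l - 1) * (b - a)" using ab by (simp add: powr_diff)
      finally show ?thesis by simp
    qed
    ultimately show ?thesis by (simp add: I_def mult_left_mono)
  qed
qed

lemma integrable_on_if_nn_integral_abs_finite:
  fixes f :: "real \<Rightarrow> real"
  assumes [measurable]: "f \<in> borel_measurable borel" "S \<in> sets borel"
    and fin: "(\<integral>\<^sup>+ s. ennreal \<bar>f s\<bar> * indicator S s \<partial>lborel) < \<infinity>"
  shows "f integrable_on S"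
proof -
  have "set_integrable lborel S f"
    unfolding set_integrable_def
  proof (rule integrableI_bounded)
    have "(\<integral>\<^sup>+ s. ennreal (norm (indicator S s *\<^sub>R f s)) \<partial>lborel)
        = (\<integral>\<^sup>+ s. ennreal \<bar>f s\<bar> * indicator S s \<partial>lborel)"
      by (intro nn_integral_cong) (auto simp: indicator_def)
    with fin show "(\<integral>\<^sup>+ s. ennreal (norm (indicator S s *\<^sub>R f s)) \<partial>lborel) < \<infinity>" by simp
  qed measurable
  then show ?thesis by (rule set_borel_integral_eq_integral(1))
qed

lemma absolutely_integrable_on_if_nn_integral_powr_finite:
  fixes f :: "real \<Rightarrow> real"
  assumes [measurable]: "f \<in> borel_measurable borel" and l: "1 \<le> l"
    and fin: "(\<integral>\<^sup>+ s. ennreal (\<bar>f s\<bar> powr l) * indicator {u..v} s \<partial>lborel) < \<infinity>"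
  shows "f absolutely_integrable_on {u..v}"
proof (rule measurable_bounded_by_integrable_imp_absolutely_integrable)
  show "(\<lambda>s. 1 + \<bar>f s\<bar> powr l) integrable_on {u..v}"
    by (intro integrable_add integrable_const_ivl integrable_on_if_nn_integral_abs_finite)
      (use fin in auto)
  show "norm (f s) \<le> 1 + \<bar>f s\<bar> powr l" for s
  proof (cases "\<bar>f s\<bar> \<le> 1")
    case True
    then show ?thesis using powr_ge_zero[of "\<bar>f s\<bar>" l] unfolding real_norm_def by linarith
  next
    case False
    then have "\<bar>f s\<bar> powr 1 \<le> \<bar>f s\<bar> powr l" using l by (intro powr_mono) auto
    then show ?thesis using False by simp
  qed
qed (auto intro!: measurable_restrict_space1 measurable_completion)

lemma abs_integral_diff_powr_le:
  fixes f :: "real \<Rightarrow> real"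
  assumes [measurable]: "f \<in> borel_measurable borel" and l: "1 \<le> l" and ab: "0 \<le> a" "a < b"
    and fin: "(\<integral>\<^sup>+ s. ennreal (\<bar>f s\<bar> powr l) * indicator {0..b} s \<partial>lborel) < \<infinity>"
  shows "ennreal (\<bar>integral {0..b} f - integral {0..a} f\<bar> powr l)
     \<le> ennreal ((b - a) powr (l - 1)) * (\<integral>\<^sup>+ s. ennreal (\<bar>f s\<bar> powr l) * indicator {a..b} s \<partial>lborel)"
proof -
  have f0b: "f absolutely_integrable_on {0..b}"
    by (rule absolutely_integrable_on_if_nn_integral_powr_finite) (use fin l in auto)
  then have f: "f integrable_on {a..b}" and abs_f: "(\<lambda>s. \<bar>f s\<bar>) integrable_on {a..b}"
    using ab by (auto simp: absolutely_integrable_on_def intro: integrable_on_subinterval)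
  have "(\<integral>\<^sup>+ s. ennreal (\<bar>f s\<bar> powr l) * indicator {a..b} s \<partial>lborel)
      \<le> (\<integral>\<^sup>+ s. ennreal (\<bar>f s\<bar> powr l) * indicator {0..b} s \<partial>lborel)"
    using ab by (intro nn_integral_mono) (auto split: split_indicator)
  then have fl: "(\<lambda>s. \<bar>f s\<bar> powr l) integrable_on {a..b}"
    using fin by (intro integrable_on_if_nn_integral_abs_finite) auto
  have "integral {0..a} f + integral {a..b} f = integral {0..b} f"
    using f0b ab by (intro Henstock_Kurzweil_Integration.integral_combine)
      (auto simp: absolutely_integrable_on_def)
  then have "\<bar>integral {0..b} f - integral {0..a} f\<bar> powr l = \<bar>integral {a..b} f\<bar> powr l"
    by (metis add_diff_cancel_left')
  also have "\<dots> \<le> (integral {a..b} (\<lambda>s. \<bar>f s\<bar>)) powr l"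
    using integral_norm_bound_integral[OF f abs_f] l by (intro powr_mono2) auto
  also have "\<dots> \<le> (b - a) powr (l - 1) * integral {a..b} (\<lambda>s. \<bar>f s\<bar> powr l)"
    using fl by (intro powr_integral_le[OF abs_f _ _ ab(2) l]) simp_all
  finally have "ennreal (\<bar>integral {0..b} f - integral {0..a} f\<bar> powr l)
      \<le> ennreal ((b - a) powr (l - 1)) * ennreal (integral {a..b} (\<lambda>s. \<bar>f s\<bar> powr l))"
    using integral_nonneg[OF fl] by (subst ennreal_mult[symmetric]) (auto intro: ennreal_leI)
  also have "ennreal (integral {a..b} (\<lambda>s. \<bar>f s\<bar> powr l))
      = (\<integral>\<^sup>+ s. ennreal (\<bar>f s\<bar> powr l) * indicator {a..b} s \<partial>lborel)"
    by (rule nn_integral_has_integral_lebesgue'[symmetric]) (use fl in auto)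
  finally show ?thesis .
qed

section \<open>Tail of the drift increment\<close>

lemma ennreal_le_iff_one_le_divide:
  fixes y :: ennreal
  assumes "0 < t"
  shows "ennreal t \<le> y \<longleftrightarrow> 1 \<le> ennreal (1 / t) * y"
proof -
  have inv: "ennreal (1 / t) * ennreal t = 1"
    using assms by (simp add: ennreal_mult[symmetric])
  show ?thesis
  proof
    assume "ennreal t \<le> y"
    then have "ennreal (1 / t) * ennreal t \<le> ennreal (1 / t) * y" by (rule mult_left_mono) simp
    with inv show "1 \<le> ennreal (1 / t) * y" by simp
  next
    assume "1 \<le> ennreal (1 / t) * y"
    then have "ennreal t * 1 \<le> ennreal t * (ennreal (1 / t) * y)" by (rule mult_left_mono) simp
    also have "\<dots> = (ennreal (1 / t) * ennreal t) * y" by (simp only: ac_simps)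
    finally show "ennreal t \<le> y" using inv by simp
  qed
qed

lemma (in finite_measure) nn_integral_Markov_inequality_measure:
  assumes [measurable]: "u \<in> borel_measurable M" and t: "0 < t" and B: "0 \<le> B"
    and int: "(\<integral>\<^sup>+x. u x \<partial>M) \<le> ennreal B"
  shows "measure M {x\<in>space M. ennreal t \<le> u x} \<le> B / t"
proof -
  have "{x\<in>space M. ennreal t \<le> u x} = {x\<in>space M. 1 \<le> ennreal (1 / t) * u x}"
    using ennreal_le_iff_one_le_divide[OF t] by blast
  then have "emeasure M {x\<in>space M. ennreal t \<le> u x}
      \<le> ennreal (1 / t) * (\<integral>\<^sup>+x. u x * indicator (space M) x \<partial>M)"
    by (simp only:) (rule nn_integral_Markov_inequality; simp)
  also have "(\<integral>\<^sup>+x. u x * indicator (space M) x \<partial>M) = (\<integral>\<^sup>+x. u x \<partial>M)"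
    by (intro nn_integral_cong) auto
  also have "ennreal (1 / t) * \<dots> \<le> ennreal (1 / t) * ennreal B"
    using int by (rule mult_left_mono) simp
  also have "\<dots> = ennreal (B / t)"
    using t B by (simp add: ennreal_mult[symmetric])
  finally have "ennreal (measure M {x\<in>space M. ennreal t \<le> u x}) \<le> ennreal (B / t)"
    by (simp only: emeasure_eq_measure)
  then show ?thesis using t B by (simp add: ennreal_le_iff)
qed

text \<open>The sampled processes s \<mapsto> X(\<lceil>(m+1)s\<rceil>/(m+1)) are measurable as countable gluings of the
  X t, and they converge to X from the right.\<close>

lemma cadlag_process_measurable_pair:
  fixes X :: "real \<Rightarrow> 'w \<Rightarrow> real"
  assumes X_meas: "\<forall>t. X t \<in> borel_measurable M" and X_cadlag: "\<forall>\<omega>\<in>space M. cadlag (\<lambda>t. X t \<omega>)"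
  shows "(\<lambda>p. X (max 0 (fst p)) (snd p)) \<in> borel_measurable (lborel \<Otimes>\<^sub>M M)"
proof (rule borel_measurable_LIMSEQ_real)
  define q where "q m s = real_of_int \<lceil>s * real (Suc m)\<rceil> / real (Suc m)" for m s
  show "(\<lambda>p. X (max 0 (q m (fst p))) (snd p)) \<in> borel_measurable (lborel \<Otimes>\<^sub>M M)" for m
  proof -
    have "(\<lambda>p. (\<lambda>(i::int) p'. X (max 0 (real_of_int i / real (Suc m))) (snd p'))
        \<lceil>fst p * real (Suc m)\<rceil> p) \<in> borel_measurable (lborel \<Otimes>\<^sub>M M)"
      by (rule measurable_compose_countable[OF measurable_compose[OF measurable_snd
            X_meas[rule_format]]]) measurable
    then show ?thesis by (simp add: q_def)
  qed
  fix p :: "real \<times> 'w" assume "p \<in> space (lborel \<Otimes>\<^sub>M M)"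
  then obtain s \<omega> where p: "p = (s, \<omega>)" and \<omega>: "\<omega> \<in> space M"
    by (cases p) (auto simp: space_pair_measure)
  have q_ge: "s \<le> q m s" for m
    using le_of_int_ceiling[of "s * real (Suc m)"] by (simp add: q_def field_simps)
  have q_le: "q m s \<le> s + 1 / real (Suc m)" for m
  proof -
    have "q m s \<le> (s * real (Suc m) + 1) / real (Suc m)"
      unfolding q_def by (intro divide_right_mono) linarith+
    then show ?thesis by (simp add: add_divide_distrib)
  qed
  have "(\<lambda>m. s + 1 / real (Suc m)) \<longlonglongrightarrow> s"
    using tendsto_add[OF tendsto_const LIMSEQ_Suc[OF lim_const_over_n[of 1]], of s] by simp
  then have "(\<lambda>m. q m s) \<longlonglongrightarrow> s"
    by (intro tendsto_sandwich[where f="\<lambda>m. s" and g="\<lambda>m. q m s"]) (use q_ge q_le in auto)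
  then have "(\<lambda>m. max 0 (q m s)) \<longlonglongrightarrow> max 0 s" by (intro tendsto_max tendsto_const)
  moreover have "continuous (at (max 0 s) within {max 0 s..}) (\<lambda>t. X t \<omega>)"
    using X_cadlag \<omega> by (simp add: cadlag_def at_within_Ici_at_right)
  moreover have "max 0 (q m s) \<in> {max 0 s..}" for m using q_ge[of m] by simp
  ultimately show "(\<lambda>m. X (max 0 (q m (fst p))) (snd p)) \<longlonglongrightarrow> X (max 0 (fst p)) (snd p)"
    unfolding p fst_conv snd_conv
    by (intro continuous_within_tendsto_compose'[of _ "{max 0 s..}" "\<lambda>t. X t \<omega>"])
qed

text \<open>Evaluating at max 0 s continues each path constantly to negative times, where cadlag says
  nothing; for 0 \<le> u this is just \<integral>_u^v |X_s(\<omega>)|^l ds.\<close>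

definition path_powr_integral :: "(real \<Rightarrow> 'w \<Rightarrow> real) \<Rightarrow> real \<Rightarrow> real \<Rightarrow> real \<Rightarrow> 'w \<Rightarrow> ennreal" where
  "path_powr_integral X l u v \<omega> =
    (\<integral>\<^sup>+s. ennreal (\<bar>X (max 0 s) \<omega>\<bar> powr l) * indicator {u..v} s \<partial>lborel)"

lemma borel_measurable_path_powr_integral:
  fixes X :: "real \<Rightarrow> 'w \<Rightarrow> real"
  assumes "\<forall>t. X t \<in> borel_measurable M" and "\<forall>\<omega>\<in>space M. cadlag (\<lambda>t. X t \<omega>)"
  shows "path_powr_integral X l u v \<in> borel_measurable M"
proof -
  have "(\<lambda>(\<omega>, s). ennreal (\<bar>X (max 0 s) \<omega>\<bar> powr l) * indicator {u..v} s)
      \<in> borel_measurable (M \<Otimes>\<^sub>M lborel)"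
    using measurable_pair_swap[OF cadlag_process_measurable_pair[OF assms]]
    by (simp add: split_beta') measurable
  from lborel.borel_measurable_nn_integral[OF this] show ?thesis
    by (simp add: path_powr_integral_def[abs_def])
qed

lemma nn_integral_path_powr_integral_le:
  fixes X :: "real \<Rightarrow> 'w \<Rightarrow> real"
  assumes "sigma_finite_measure M"
    and X_meas: "\<forall>t. X t \<in> borel_measurable M" and X_cadlag: "\<forall>\<omega>\<in>space M. cadlag (\<lambda>t. X t \<omega>)"
    and u: "0 \<le> u"
    and K: "\<And>s. u \<le> s \<Longrightarrow> s \<le> v \<Longrightarrow> (\<integral>\<^sup>+\<omega>. ennreal (\<bar>X s \<omega>\<bar> powr l) \<partial>M) \<le> K"
  shows "(\<integral>\<^sup>+\<omega>. path_powr_integral X l u v \<omega> \<partial>M) \<le> ennreal (v - u) * K"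
proof -
  interpret pair_sigma_finite lborel M
    by (intro pair_sigma_finite.intro lborel.sigma_finite_measure_axioms assms(1))
  define F where "F = (\<lambda>(s, \<omega>). ennreal (\<bar>X (max 0 s) \<omega>\<bar> powr l) * indicator {u..v} s)"
  have "F \<in> borel_measurable (lborel \<Otimes>\<^sub>M M)"
    using cadlag_process_measurable_pair[OF X_meas X_cadlag]
    unfolding F_def by (simp add: split_beta') measurable
  then have "(\<integral>\<^sup>+\<omega>. (\<integral>\<^sup>+s. F (s, \<omega>) \<partial>lborel) \<partial>M) = (\<integral>\<^sup>+s. (\<integral>\<^sup>+\<omega>. F (s, \<omega>) \<partial>M) \<partial>lborel)"
    by (rule Fubini)
  also have "\<dots> \<le> (\<integral>\<^sup>+s. K * indicator {u..v} s \<partial>lborel)"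
    using u by (intro nn_integral_mono) (auto simp: F_def K split: split_indicator)
  also have "\<dots> = K * ennreal (v - u)"
    by (cases "u \<le> v") (simp_all add: nn_integral_cmult_indicator ennreal_eq_0_iff)
  finally show ?thesis by (simp add: F_def path_powr_integral_def mult.commute)
qed

lemma drift_exceedance_imp_powr_le:
  fixes f :: "real \<Rightarrow> real"
  assumes "f \<in> borel_measurable borel" and l: "1 \<le> l" and ab: "0 \<le> a" "a < b" and c: "0 \<le> c"
    and fin: "(\<integral>\<^sup>+ s. ennreal (\<bar>f s\<bar> powr l) * indicator {0..b} s \<partial>lborel) < \<infinity>"
    and exceeds: "c < \<bar>(- \<alpha> * integral {0..b} f) - (- \<alpha> * integral {0..a} f)\<bar>"
  shows "ennreal (c powr l) \<le> ennreal (\<bar>\<alpha>\<bar> powr l * (b - a) powr (l - 1))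
    * (\<integral>\<^sup>+ s. ennreal (\<bar>f s\<bar> powr l) * indicator {a..b} s \<partial>lborel)"
proof -
  have "c < \<bar>\<alpha>\<bar> * \<bar>integral {0..b} f - integral {0..a} f\<bar>"
    using exceeds by (simp add: abs_mult[symmetric] algebra_simps)
  then have "c powr l \<le> \<bar>\<alpha>\<bar> powr l * \<bar>integral {0..b} f - integral {0..a} f\<bar> powr l"
    using c l by (simp add: powr_mult[symmetric] powr_mono2)
  then have "ennreal (c powr l)
      \<le> ennreal (\<bar>\<alpha>\<bar> powr l) * ennreal (\<bar>integral {0..b} f - integral {0..a} f\<bar> powr l)"
    by (simp add: ennreal_mult[symmetric] ennreal_leI)
  also have "\<dots> \<le> ennreal (\<bar>\<alpha>\<bar> powr l) * (ennreal ((b - a) powr (l - 1))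
      * (\<integral>\<^sup>+ s. ennreal (\<bar>f s\<bar> powr l) * indicator {a..b} s \<partial>lborel))"
    using abs_integral_diff_powr_le[OF assms(1) l ab fin] by (rule mult_left_mono) simp
  finally show ?thesis by (simp add: ennreal_mult mult.assoc)
qed

lemma AE_drift_exceedance_imp_powr_le:
  fixes X :: "real \<Rightarrow> 'w \<Rightarrow> real"
  assumes X_meas: "\<forall>t. X t \<in> borel_measurable M" and X_cadlag: "\<forall>\<omega>\<in>space M. cadlag (\<lambda>t. X t \<omega>)"
    and l: "1 \<le> l" and ab: "0 \<le> a" "a < b" and c: "0 \<le> c"
    and finite: "AE \<omega> in M. path_powr_integral X l 0 b \<omega> \<noteq> \<infinity>"
  shows "AE \<omega> in M.
    c < \<bar>(- \<alpha> * integral {0..b} (\<lambda>s. X s \<omega>)) - (- \<alpha> * integral {0..a} (\<lambda>s. X s \<omega>))\<bar> \<longrightarrow>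
    ennreal (c powr l) \<le> ennreal (\<bar>\<alpha>\<bar> powr l * (b - a) powr (l - 1)) * path_powr_integral X l a b \<omega>"
  using AE_space finite
proof eventually_elim
  case (elim \<omega>)
  have meas: "(\<lambda>s. X (max 0 s) \<omega>) \<in> borel_measurable borel"
    using measurable_Pair1[OF cadlag_process_measurable_pair[OF X_meas X_cadlag] elim(1)]
    by simp
  have int: "integral {0..v} (\<lambda>s. X s \<omega>) = integral {0..v} (\<lambda>s. X (max 0 s) \<omega>)" for v
    by (intro integral_cong) simp
  show ?case
    using drift_exceedance_imp_powr_le[OF meas l ab c, of \<alpha>] elim
    by (auto simp: path_powr_integral_def int less_top)
qed

lemma drift_increment_tail:
  fixes X :: "real \<Rightarrow> 'w \<Rightarrow> real"
  assumes "prob_space M"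
    and X_meas: "\<forall>t. X t \<in> borel_measurable M" and X_cadlag: "\<forall>\<omega>\<in>space M. cadlag (\<lambda>t. X t \<omega>)"
    and l: "1 \<le> l" and ab: "0 \<le> a" "a < b" and c: "0 < c" and K: "0 \<le> K"
    and moment: "\<And>s. 0 \<le> s \<Longrightarrow> (\<integral>\<^sup>+\<omega>. ennreal (\<bar>X s \<omega>\<bar> powr l) \<partial>M) \<le> ennreal K"
    and B: "\<bar>\<alpha>\<bar> powr l * K * ((b - a) / c) powr l \<le> B"
  shows "\<exists>E\<in>sets M. measure M E \<le> B \<and>
    (AE \<omega> in M. c < \<bar>(- \<alpha> * integral {0..b} (\<lambda>s. X s \<omega>)) - (- \<alpha> * integral {0..a} (\<lambda>s. X s \<omega>))\<bar>
      \<longrightarrow> \<omega> \<in> E)"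
proof -
  interpret prob_space M by fact
  let ?Y = "path_powr_integral X l"
  have [measurable]: "?Y u v \<in> borel_measurable M" for u v
    using X_meas X_cadlag by (rule borel_measurable_path_powr_integral)
  have EY: "(\<integral>\<^sup>+\<omega>. ?Y u v \<omega> \<partial>M) \<le> ennreal ((v - u) * K)" if "0 \<le> u" "u \<le> v" for u v
    using nn_integral_path_powr_integral_le[OF sigma_finite_measure_axioms X_meas X_cadlag
        \<open>0 \<le> u\<close>, of v l "ennreal K"] moment that K
    by (simp add: ennreal_mult)
  have "(\<integral>\<^sup>+\<omega>. ?Y 0 b \<omega> \<partial>M) \<noteq> \<infinity>"
    using EY[of 0 b] ab by (auto simp: top_unique)
  then have "AE \<omega> in M. ?Y 0 b \<omega> \<noteq> \<infinity>"
    by (intro nn_integral_noteq_infinite) simp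
  define A where "A = \<bar>\<alpha>\<bar> powr l * (b - a) powr (l - 1)"
  define E where "E = {\<omega>\<in>space M. ennreal (c powr l) \<le> ennreal A * ?Y a b \<omega>}"
  have "measure M E \<le> A * ((b - a) * K) / c powr l"
    unfolding E_def
  proof (rule nn_integral_Markov_inequality_measure)
    show "(\<integral>\<^sup>+\<omega>. ennreal A * ?Y a b \<omega> \<partial>M) \<le> ennreal (A * ((b - a) * K))"
      using mult_left_mono[OF EY[of a b], of "ennreal A"] ab K
      by (simp add: nn_integral_cmult A_def ennreal_mult)
  qed (use c ab K in \<open>auto simp: A_def\<close>)
  also have "\<dots> = \<bar>\<alpha>\<bar> powr l * K * ((b - a) / c) powr l"
  proof -
    have "(b - a) powr (l - 1) * (b - a) = (b - a) powr l" using ab by (simp add: powr_diff)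
    then show ?thesis using ab c by (simp add: A_def powr_divide field_simps)
  qed
  finally have "measure M E \<le> B" using B by linarith
  moreover have "E \<in> sets M" unfolding E_def by measurable
  moreover have "AE \<omega> in M.
      c < \<bar>(- \<alpha> * integral {0..b} (\<lambda>s. X s \<omega>)) - (- \<alpha> * integral {0..a} (\<lambda>s. X s \<omega>))\<bar> \<longrightarrow> \<omega> \<in> E"
    using AE_drift_exceedance_imp_powr_le[OF X_meas X_cadlag l ab _ \<open>AE \<omega> in M. ?Y 0 b \<omega> \<noteq> \<infinity>\<close>,
        of c \<alpha>] c
    by (auto simp: E_def A_def elim!: eventually_mono)
  ultimately show ?thesis by blast
qed

lemma drift_increment_tail_mesh:
  fixes X :: "real \<Rightarrow> 'w \<Rightarrow> real"
  assumes "prob_space M"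
    and X_meas: "\<forall>t. X t \<in> borel_measurable M" and X_cadlag: "\<forall>\<omega>\<in>space M. cadlag (\<lambda>t. X t \<omega>)"
    and l: "1 \<le> l" and st: "0 \<le> s" "s < t" "t - s \<le> D" and K: "0 \<le> K"
    and moment: "\<And>s. 0 \<le> s \<Longrightarrow> (\<integral>\<^sup>+\<omega>. ennreal (\<bar>X s \<omega>\<bar> powr l) \<partial>M) \<le> ennreal K"
  shows "\<exists>E\<in>sets M. measure M E \<le> \<bar>\<alpha>\<bar> powr l * K * 2 powr l * D powr (l * (1/2 + \<delta>)) \<and>
    (AE \<omega> in M. D powr (1/2 - \<delta>) / 2
        < \<bar>(- \<alpha> * integral {0..t} (\<lambda>s. X s \<omega>)) - (- \<alpha> * integral {0..s} (\<lambda>s. X s \<omega>))\<bar> \<longrightarrow> \<omega> \<in> E)"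
proof -
  have D: "0 < D" using st by simp
  have "t - s \<le> D powr (1/2 + \<delta>) * D powr (1/2 - \<delta>)"
    using st D by (simp add: powr_add[symmetric])
  then have le: "(t - s) / D powr (1/2 - \<delta>) \<le> D powr (1/2 + \<delta>)"
    using D by (simp add: pos_divide_le_eq)
  have "(t - s) / (D powr (1/2 - \<delta>) / 2) = 2 * ((t - s) / D powr (1/2 - \<delta>))"
    using D by (simp add: field_simps)
  also have "\<dots> \<le> 2 * D powr (1/2 + \<delta>)" using le by (rule mult_left_mono) simp
  finally have ratio: "(t - s) / (D powr (1/2 - \<delta>) / 2) \<le> 2 * D powr (1/2 + \<delta>)" .
  have "((t - s) / (D powr (1/2 - \<delta>) / 2)) powr l \<le> (2 * D powr (1/2 + \<delta>)) powr l"
    by (rule powr_mono2[OF _ _ ratio]) (use st l in auto)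
  also have "\<dots> = 2 powr l * D powr (l * (1/2 + \<delta>))"
    by (simp add: powr_mult powr_powr mult.commute)
  finally have "\<bar>\<alpha>\<bar> powr l * K * ((t - s) / (D powr (1/2 - \<delta>) / 2)) powr l
      \<le> \<bar>\<alpha>\<bar> powr l * K * (2 powr l * D powr (l * (1/2 + \<delta>)))"
    by (rule mult_left_mono) (use K in simp)
  then have "\<bar>\<alpha>\<bar> powr l * K * ((t - s) / (D powr (1/2 - \<delta>) / 2)) powr l
      \<le> \<bar>\<alpha>\<bar> powr l * K * 2 powr l * D powr (l * (1/2 + \<delta>))"
    by (simp only: mult.assoc)
  moreover have "0 < D powr (1/2 - \<delta>) / 2" using D by simp
  ultimately show ?thesis
    by (intro drift_increment_tail[OF assms(1-4) st(1,2) _ K moment])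
qed

section \<open>Tail of the Brownian increment\<close>

lemma normal_tail_le_even_moment:
  fixes Z :: "'w \<Rightarrow> real"
  assumes "prob_space M" and Z: "distributed M lborel Z (normal_density 0 (sqrt h))"
    and h: "0 < h" and c: "0 < c"
  shows "measure M {\<omega>\<in>space M. c < \<bar>Z \<omega>\<bar>} \<le> fact (2 * k) / (2 ^ k * fact k) * h ^ k / c ^ (2 * k)"
proof -
  interpret prob_space M by fact
  have [measurable]: "Z \<in> borel_measurable M"
    using distributed_measurable[OF Z] by (simp add: measurable_lborel1)
  have moment: "has_bochner_integral lborel (\<lambda>x. normal_density 0 (sqrt h) x * x ^ (2 * k))
      (fact (2 * k) / (2 ^ k * fact k) * h ^ k)"
  proof -
    have "has_bochner_integral lborel (\<lambda>x. normal_density 0 (sqrt h) x * (x - 0) ^ (2 * k))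
        (fact (2 * k) / ((2 / (sqrt h)\<^sup>2) ^ k * fact k))"
      by (rule normal_moment_even) (simp add: h)
    moreover have "fact (2 * k) / ((2 / (sqrt h)\<^sup>2) ^ k * fact k)
        = fact (2 * k) / (2 ^ k * fact k) * h ^ k"
      using h by (simp add: power_divide field_simps)
    ultimately show ?thesis by simp
  qed
  have density_nonneg: "\<And>x. 0 \<le> normal_density 0 (sqrt h) x"
    by (simp add: normal_density_nonneg)
  have integrable: "integrable M (\<lambda>\<omega>. Z \<omega> ^ (2 * k))"
    using distributed_integrable[OF Z _ density_nonneg, of "\<lambda>x. x ^ (2 * k)"]
      integrable.intros[OF moment] by simp
  have expectation: "(\<integral>\<omega>. Z \<omega> ^ (2 * k) \<partial>M) = fact (2 * k) / (2 ^ k * fact k) * h ^ k"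
    using distributed_integral[OF Z _ density_nonneg, of "\<lambda>x. x ^ (2 * k)"]
      has_bochner_integral_integral_eq[OF moment] by simp
  have "measure M {\<omega>\<in>space M. c < \<bar>Z \<omega>\<bar>} \<le> measure M {\<omega>\<in>space M. c ^ (2 * k) \<le> Z \<omega> ^ (2 * k)}"
  proof (rule finite_measure_mono)
    show "{\<omega>\<in>space M. c < \<bar>Z \<omega>\<bar>} \<subseteq> {\<omega>\<in>space M. c ^ (2 * k) \<le> Z \<omega> ^ (2 * k)}"
    proof safe
      fix \<omega> assume "c < \<bar>Z \<omega>\<bar>"
      then have "c ^ (2 * k) \<le> \<bar>Z \<omega>\<bar> ^ (2 * k)" using c by (intro power_mono) auto
      then show "c ^ (2 * k) \<le> Z \<omega> ^ (2 * k)" using power_even_abs[of "2 * k" "Z \<omega>"] by simp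
    qed
  qed measurable
  also have "\<dots> \<le> (\<integral>\<omega>. Z \<omega> ^ (2 * k) \<partial>M) / c ^ (2 * k)"
    using c by (intro integral_Markov_inequality_measure[OF integrable, of "space M"])
      (simp_all add: zero_le_even_power)
  finally show ?thesis unfolding expectation .
qed

lemma brownian_increment_tail:
  assumes P: "prob_space M" and W: "brownian_motion M W" and \<delta>: "0 < \<delta>"
  obtains C where "\<And>s t D. 0 \<le> s \<Longrightarrow> s < t \<Longrightarrow> t - s \<le> D \<Longrightarrow> D \<le> 1 \<Longrightarrow>
    measure M {\<omega>\<in>space M. D powr (1/2 - \<delta>) / 2 < \<bar>W t \<omega> - W s \<omega>\<bar>} \<le> C * D powr e"
proof -
  define k where "k = nat \<lceil>e / (2 * \<delta>)\<rceil>"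
  have k: "e \<le> 2 * \<delta> * real k"
  proof -
    have "e / (2 * \<delta>) \<le> real k" unfolding k_def by linarith
    then show ?thesis using \<delta> by (simp add: field_simps)
  qed
  define m :: real where "m = fact (2 * k) / (2 ^ k * fact k)"
  show thesis
  proof (rule that[of "m * 4 ^ k"])
    fix s t D :: real
    assume st: "0 \<le> s" "s < t" "t - s \<le> D" and D1: "D \<le> 1"
    then have D: "0 < D" by simp
    have "distributed M lborel (\<lambda>\<omega>. W t \<omega> - W s \<omega>) (normal_density 0 (sqrt (t - s)))"
      using W st unfolding brownian_motion_def by blast
    then have "measure M {\<omega>\<in>space M. D powr (1/2 - \<delta>) / 2 < \<bar>W t \<omega> - W s \<omega>\<bar>}
        \<le> m * (t - s) ^ k / (D powr (1/2 - \<delta>) / 2) ^ (2 * k)"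
      unfolding m_def using st D by (intro normal_tail_le_even_moment[OF P]) auto
    also have "(D powr (1/2 - \<delta>) / 2) ^ (2 * k) = D powr (real k - 2 * \<delta> * real k) / 4 ^ k"
    proof -
      have "(D powr (1/2 - \<delta>)) ^ (2 * k) = D powr (real (2 * k) * (1/2 - \<delta>))"
        using D by (simp add: powr_power)
      moreover have "(2::real) ^ (2 * k) = 4 ^ k" by (simp add: power_mult)
      ultimately show ?thesis by (simp add: power_divide algebra_simps)
    qed
    also have "m * (t - s) ^ k / (D powr (real k - 2 * \<delta> * real k) / 4 ^ k)
        = m * 4 ^ k * ((t - s) ^ k / D powr (real k - 2 * \<delta> * real k))"
      by simp
    also have "\<dots> \<le> m * 4 ^ k * (D powr real k / D powr (real k - 2 * \<delta> * real k))"
      using st D by (intro mult_left_mono divide_right_mono)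
        (auto simp: m_def powr_realpow intro: power_mono)
    also have "D powr real k / D powr (real k - 2 * \<delta> * real k) = D powr (2 * \<delta> * real k)"
      by (simp add: powr_diff[symmetric])
    also have "m * 4 ^ k * D powr (2 * \<delta> * real k) \<le> m * 4 ^ k * D powr e"
      using k D D1 by (intro mult_left_mono powr_mono') (auto simp: m_def)
    finally show "measure M {\<omega>\<in>space M. D powr (1/2 - \<delta>) / 2 < \<bar>W t \<omega> - W s \<omega>\<bar>}
        \<le> m * 4 ^ k * D powr e" .
  qed
qed

section \<open>Both increments on the observation grid\<close>

lemma (in finite_measure) measure_abs_add_gt_le:
  fixes U V :: "'a \<Rightarrow> real"
  assumes "{x\<in>space M. c / 2 < \<bar>U x\<bar>} \<in> sets M" and "measure M {x\<in>space M. c / 2 < \<bar>U x\<bar>} \<le> A"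
    and "\<exists>E\<in>sets M. measure M E \<le> B \<and> (AE x in M. c / 2 < \<bar>V x\<bar> \<longrightarrow> x \<in> E)"
  shows "measure M {x\<in>space M. c < \<bar>U x + V x\<bar>} \<le> A + B"
proof -
  obtain E where E: "E \<in> sets M" "measure M E \<le> B" and V: "AE x in M. c / 2 < \<bar>V x\<bar> \<longrightarrow> x \<in> E"
    using assms(3) by blast
  have "measure M {x\<in>space M. c < \<bar>U x + V x\<bar>} \<le> measure M ({x\<in>space M. c / 2 < \<bar>U x\<bar>} \<union> E)"
    using V
  proof (intro finite_measure_mono_AE, elim AE_mp, intro AE_I2 impI)
    fix x assume "c / 2 < \<bar>V x\<bar> \<longrightarrow> x \<in> E" "x \<in> {x\<in>space M. c < \<bar>U x + V x\<bar>}"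
    then show "x \<in> {x\<in>space M. c / 2 < \<bar>U x\<bar>} \<union> E" by auto
  qed (use assms(1) E in auto)
  also have "\<dots> \<le> measure M {x\<in>space M. c / 2 < \<bar>U x\<bar>} + measure M E"
    using assms(1) E by (intro measure_Un_le) auto
  finally show ?thesis using assms(2) E by simp
qed

lemma increment_tail_le:
  fixes X W :: "real \<Rightarrow> 'w \<Rightarrow> real"
  assumes P: "prob_space M"
    and X_meas: "\<forall>t. X t \<in> borel_measurable M" and X_cadlag: "\<forall>\<omega>\<in>space M. cadlag (\<lambda>t. X t \<omega>)"
    and l: "1 \<le> l" and K: "0 \<le> K"
    and moment: "\<And>s. 0 \<le> s \<Longrightarrow> (\<integral>\<^sup>+\<omega>. ennreal (\<bar>X s \<omega>\<bar> powr l) \<partial>M) \<le> ennreal K"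
    and W_meas: "\<And>t. W t \<in> borel_measurable M" and st: "0 \<le> s" "s < t" "t - s \<le> D"
    and W_tail: "measure M {\<omega>\<in>space M. D powr (1/2 - \<delta>) / 2 < \<bar>W t \<omega> - W s \<omega>\<bar>}
      \<le> CW * D powr (l * (1/2 + \<delta>))"
  shows "measure M {\<omega>\<in>space M. D powr (1/2 - \<delta>)
      < \<bar>(W t \<omega> - W s \<omega>) + ((- a * integral {0..t} (\<lambda>s. X s \<omega>)) - (- a * integral {0..s} (\<lambda>s. X s \<omega>)))\<bar>}
    \<le> (CW + \<bar>a\<bar> powr l * K * 2 powr l) * D powr (l * (1/2 + \<delta>))"
proof -
  interpret prob_space M by fact
  have "{\<omega>\<in>space M. D powr (1/2 - \<delta>) / 2 < \<bar>W t \<omega> - W s \<omega>\<bar>} \<in> sets M"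
    using W_meas by measurable
  from measure_abs_add_gt_le[OF this W_tail
      drift_increment_tail_mesh[OF P X_meas X_cadlag l st K moment, of a \<delta>]]
  show ?thesis by (simp add: distrib_right)
qed

lemma increment_tail_uniform:
  fixes X W :: "real \<Rightarrow> 'w \<Rightarrow> real"
  assumes P: "prob_space M" and W_bm: "brownian_motion M W"
    and X_meas: "\<forall>t. X t \<in> borel_measurable M" and X_cadlag: "\<forall>\<omega>\<in>space M. cadlag (\<lambda>t. X t \<omega>)"
    and l: "1 \<le> l" and moments: "(SUP s\<in>{0..}. \<integral>\<^sup>+ \<omega>. ennreal (\<bar>X s \<omega>\<bar> powr l) \<partial>M) < \<infinity>"
    and \<delta>: "0 < \<delta>"
  shows "\<exists>C. \<forall>D s t. 0 \<le> s \<and> s < t \<and> t - s \<le> D \<and> D \<le> 1 \<longrightarrow>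
    measure M {\<omega>\<in>space M. D powr (1/2 - \<delta>)
      < \<bar>(W t \<omega> - W s \<omega>) + ((- a * integral {0..t} (\<lambda>s. X s \<omega>)) - (- a * integral {0..s} (\<lambda>s. X s \<omega>)))\<bar>}
    \<le> C * D powr (l * (1/2 + \<delta>))"
proof -
  define K where "K = enn2real (SUP s\<in>{0..}. \<integral>\<^sup>+ \<omega>. ennreal (\<bar>X s \<omega>\<bar> powr l) \<partial>M)"
  have moment: "(\<integral>\<^sup>+ \<omega>. ennreal (\<bar>X s \<omega>\<bar> powr l) \<partial>M) \<le> ennreal K" if "0 \<le> s" for s
  proof -
    have "(\<integral>\<^sup>+ \<omega>. ennreal (\<bar>X s \<omega>\<bar> powr l) \<partial>M)
        \<le> (SUP s\<in>{0..}. \<integral>\<^sup>+ \<omega>. ennreal (\<bar>X s \<omega>\<bar> powr l) \<partial>M)"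
      using that by (intro SUP_upper) simp
    then show ?thesis using moments by (simp add: K_def less_top)
  qed
  obtain CW where CW: "\<And>s t D. 0 \<le> s \<Longrightarrow> s < t \<Longrightarrow> t - s \<le> D \<Longrightarrow> D \<le> 1 \<Longrightarrow>
      measure M {\<omega>\<in>space M. D powr (1/2 - \<delta>) / 2 < \<bar>W t \<omega> - W s \<omega>\<bar>} \<le> CW * D powr (l * (1/2 + \<delta>))"
    using brownian_increment_tail[OF P W_bm \<delta>] by blast
  have W_meas: "\<And>t. W t \<in> borel_measurable M" using W_bm by (simp add: brownian_motion_def)
  have "0 \<le> K" by (simp add: K_def)
  from increment_tail_le[where W=W and a=a, OF P X_meas X_cadlag l this moment W_meas] CW
  show ?thesis
    by (intro exI[of _ "CW + \<bar>a\<bar> powr l * K * 2 powr l"] allI impI) blast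
qed

lemma obs_scheme_grid:
  assumes "obs_scheme tt" and "i < n"
  shows "0 \<le> tt n i" and "tt n i < tt n (Suc i)" and "tt n (Suc i) - tt n i \<le> mesh tt n"
proof -
  have incr: "\<forall>n. \<forall>i<n. tt n i < tt n (Suc i)" using assms(1) by (simp add: obs_scheme_def)
  show "tt n i < tt n (Suc i)" using incr assms(2) by blast
  show "0 \<le> tt n i" using assms(2)
  proof (induction i)
    case 0
    then show ?case using assms(1) by (simp add: obs_scheme_def)
  next
    case (Suc i)
    then show ?case using incr by (meson Suc_lessD less_imp_le order.trans)
  qed
  show "tt n (Suc i) - tt n i \<le> mesh tt n"
    unfolding mesh_def using assms(2) by (intro Max_ge) auto
qed

lemma obs_scheme_eventually_mesh_le_1:
  assumes "obs_scheme tt"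
  shows "\<forall>\<^sub>F n in sequentially. mesh tt n \<le> 1"
proof -
  have "mesh tt \<longlonglongrightarrow> 0" using assms by (simp add: obs_scheme_def)
  then have "\<forall>\<^sub>F n in sequentially. mesh tt n < 1" by (rule order_tendstoD(2)) simp
  then show ?thesis by (rule eventually_mono) simp
qed

lemma obs_scheme_eventually_increment_bound:
  fixes P :: "real \<Rightarrow> real \<Rightarrow> real \<Rightarrow> real"
  assumes scheme: "obs_scheme tt"
    and bound: "\<exists>C. \<forall>D s t. 0 \<le> s \<and> s < t \<and> t - s \<le> D \<and> D \<le> 1 \<longrightarrow> P D s t \<le> C * D powr e"
  shows "\<exists>C. \<forall>\<^sub>F n in sequentially. \<forall>i\<in>{1..n-1}.
    P (mesh tt n) (tt n i) (tt n (Suc i)) \<le> C * mesh tt n powr e"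
proof -
  obtain C where C: "\<And>D s t. 0 \<le> s \<Longrightarrow> s < t \<Longrightarrow> t - s \<le> D \<Longrightarrow> D \<le> 1 \<Longrightarrow> P D s t \<le> C * D powr e"
    using bound by blast
  have "\<forall>\<^sub>F n in sequentially. \<forall>i\<in>{1..n-1}.
      P (mesh tt n) (tt n i) (tt n (Suc i)) \<le> C * mesh tt n powr e"
    using obs_scheme_eventually_mesh_le_1[OF scheme]
  proof eventually_elim
    case (elim n)
    show ?case
    proof
      fix i assume "i \<in> {1..n-1}"
      then have "i < n" by auto
      with elim show "P (mesh tt n) (tt n i) (tt n (Suc i)) \<le> C * mesh tt n powr e"
        by (intro C obs_scheme_grid[OF scheme])
    qed
  qed
  then show ?thesis by blast
qed

theorem lemma3p2:
  fixes M :: "'w measure"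
    and L W J X :: "real \<Rightarrow> 'w \<Rightarrow> real"
    and \<sigma> a l :: real
    and \<mu> :: "real measure"
    and tt :: "nat \<Rightarrow> nat \<Rightarrow> real"
  assumes P: "prob_space M"
    and scheme: "obs_scheme tt"
    and L_levy: "levy_process M L" and L_trip: "levy_triplet M L 0 (\<sigma>\<^sup>2) \<mu>"
    and W_bm: "brownian_motion M W"
    and J_levy: "levy_process M J" and J_trip: "levy_triplet M J 0 0 \<mu>"
    and WJ_indep: "prob_space.indep_var M
         (Pi\<^sub>M {0..} (\<lambda>_. borel)) (\<lambda>\<omega>. restrict (\<lambda>t. W t \<omega>) {0..})
         (Pi\<^sub>M {0..} (\<lambda>_. borel)) (\<lambda>\<omega>. restrict (\<lambda>t. J t \<omega>) {0..})"
    and L_decomp: "\<forall>t\<ge>0. \<forall>\<omega>\<in>space M. L t \<omega> = \<sigma> * W t \<omega> + J t \<omega>"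
    and X_meas: "\<forall>t. X t \<in> borel_measurable M"
    and X_cadlag: "\<forall>\<omega>\<in>space M. cadlag (\<lambda>t. X t \<omega>)"
    and X0_indep: "prob_space.indep_set M
         (sets (vimage_algebra (space M) (X 0) borel))
         (sets (vimage_algebra (space M) (\<lambda>\<omega>. restrict (\<lambda>t. L t \<omega>) {0..})
                 (Pi\<^sub>M {0..} (\<lambda>_. borel))))"
    and X_sde: "AE \<omega> in M. \<forall>t\<ge>0.
         X t \<omega> = X 0 \<omega> - a * integral {0..t} (\<lambda>s. X s \<omega>) + L t \<omega>"
    and l_ge: "l \<ge> 1"
    and moments: "(SUP s\<in>{0..}. \<integral>\<^sup>+ \<omega>. ennreal (\<bar>X s \<omega>\<bar> powr l) \<partial>M) < \<infinity>"
  shows "\<forall>\<delta>. 0 < \<delta> \<and> \<delta> < 1/2 \<longrightarrow>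
    (\<exists>C. \<forall>\<^sub>F n in sequentially. \<forall>i\<in>{1..n-1}.
       measure M {\<omega>\<in>space M.
          \<bar>(W (tt n (Suc i)) \<omega> - W (tt n i) \<omega>)
           + ((- a * integral {0..tt n (Suc i)} (\<lambda>s. X s \<omega>))
              - (- a * integral {0..tt n i} (\<lambda>s. X s \<omega>)))\<bar>
          > mesh tt n powr (1/2 - \<delta>)}
       \<le> C * mesh tt n powr (l * (1/2 + \<delta>)))"
  by (intro allI impI, rule obs_scheme_eventually_increment_bound[OF scheme
        increment_tail_uniform[OF P W_bm X_meas X_cadlag l_ge moments]]) simp

end
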